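(* Let $f(x)=a_nx^n+a_{n-1}x^{n-1}+\dots+a_1x+a_0\in\mathbb{Z}[x]$, where $n$ is not divisible by $3$. Suppose that there exists a prime $p$ such that $p\nmid a_n$, $p^3\mid a_i$ for all $0\leq i\leq n-1$, and $p^4\nmid a_0$. Then $f(x)$ is irreducible over $\mathbb{Z}$.
   Context: A nonconstant polynomial in $\mathbb{Z}[x]$ is called reducible over $\mathbb{Z}$ if it can be written as a product of two nonconstant polynomials in $\mathbb{Z}[x]$; otherwise it is irreducible over $\mathbb{Z}$. *)

theory Defs
  imports "HOL-Computational_Algebra.Polynomial"
begin

definition irreducible_over_Z :: "int poly \<Rightarrow> bool" where
  "irreducible_over_Z f \<longleftrightarrow>
     degree f > 0 \<and> \<not> (\<exists>g h. degree g > 0 \<and> degree h > 0 \<and> f = g * h)"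

end

theory Submission
  imports Defs
begin

text \<open>
  This is an instance of Dumas' theorem on Newton polygons. Give the monomial \<open>c x\<^sup>i\<close> the weight
  \<open>n \<cdot> v\<^sub>p(c) + 3 i\<close>. The minimal weight of the terms of a polynomial is additive under
  multiplication (the product of the first terms of minimal weight of both factors cannot be
  cancelled), and the hypotheses say that the minimal weight of \<open>f\<close> is \<open>3n\<close>, attained at both
  \<open>x\<^sup>0\<close> and \<open>x\<^sup>n\<close>. For a factorisation \<open>f = g h\<close> this forces \<open>n \<cdot> v\<^sub>p(g(0)) = 3 deg g\<close> with
  \<open>0 < deg g < n\<close>, hence \<open>0 < v\<^sub>p(g(0)) < 3\<close>; this is impossible because \<open>3\<close> does not divide \<open>n\<close>.
\<close>

definition newton_weight :: "nat \<Rightarrow> nat \<Rightarrow> 'a :: factorial_semiring \<Rightarrow> 'a poly \<Rightarrow> nat \<Rightarrow> nat" where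
  "newton_weight A B p q i = A * multiplicity p (coeff q i) + B * i"

definition min_newton_weight :: "nat \<Rightarrow> nat \<Rightarrow> 'a :: factorial_semiring \<Rightarrow> 'a poly \<Rightarrow> nat" where
  "min_newton_weight A B p q = Min (newton_weight A B p q ` {i. coeff q i \<noteq> 0})"

lemma finite_nonzero_coeffs: "finite {i. coeff q i \<noteq> 0}"
  by (rule finite_subset[of _ "{..degree q}"]) (auto intro: le_degree)

lemma min_newton_weight_le:
  "coeff q i \<noteq> 0 \<Longrightarrow> min_newton_weight A B p q \<le> newton_weight A B p q i"
  unfolding min_newton_weight_def by (rule Min_le) (auto simp: finite_nonzero_coeffs)

lemma min_newton_weight_geI:
  assumes "q \<noteq> 0" and "\<And>i. coeff q i \<noteq> 0 \<Longrightarrow> c \<le> newton_weight A B p q i"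
  shows "c \<le> min_newton_weight A B p q"
  unfolding min_newton_weight_def using assms
  by (subst Min_ge_iff) (auto simp: finite_nonzero_coeffs intro: exI[of _ "degree q"])

lemma first_min_newton_weight_exists:
  assumes "q \<noteq> 0"
  obtains i0 where "coeff q i0 \<noteq> 0" "newton_weight A B p q i0 = min_newton_weight A B p q"
    "\<And>i. i < i0 \<Longrightarrow> coeff q i \<noteq> 0 \<Longrightarrow> min_newton_weight A B p q < newton_weight A B p q i"
proof -
  let ?P = "\<lambda>i. coeff q i \<noteq> 0 \<and> newton_weight A B p q i = min_newton_weight A B p q"
  have "min_newton_weight A B p q \<in> newton_weight A B p q ` {i. coeff q i \<noteq> 0}"
    unfolding min_newton_weight_def using assms
    by (intro Min_in finite_imageI finite_nonzero_coeffs) (auto intro: exI[of _ "degree q"])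
  then have "\<exists>i. ?P i" by auto
  then have first: "?P (LEAST i. ?P i)" by (rule LeastI_ex)
  have "min_newton_weight A B p q < newton_weight A B p q i"
    if "i < (LEAST i. ?P i)" "coeff q i \<noteq> 0" for i
    using not_less_Least[OF that(1)] min_newton_weight_le[OF that(2), of A B p] that(2) by auto
  with first that show ?thesis by blast
qed

text \<open>
  The coefficient of \<open>x\<^sup>i\<^sup>0\<^sup>+\<^sup>j\<^sup>0\<close> in \<open>g h\<close>, for the first indices \<open>i0\<close>, \<open>j0\<close> of minimal weight,
  is \<open>g\<^sub>i\<^sub>0 h\<^sub>j\<^sub>0\<close> plus terms of strictly larger weight, which are divisible by a higher power of \<open>p\<close>.
\<close>
lemma min_newton_weight_mult_le:
  fixes g h :: "'a :: factorial_semiring poly"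
  assumes p: "prime_elem p" and "g \<noteq> 0" "h \<noteq> 0"
  shows "min_newton_weight A B p (g * h) \<le> min_newton_weight A B p g + min_newton_weight A B p h"
proof -
  let ?v = "\<lambda>c. multiplicity p c" and ?W = "newton_weight A B p" and ?\<mu> = "min_newton_weight A B p"
  obtain i0 where g0: "coeff g i0 \<noteq> 0" "?W g i0 = ?\<mu> g"
    and g_before: "\<And>i. i < i0 \<Longrightarrow> coeff g i \<noteq> 0 \<Longrightarrow> ?\<mu> g < ?W g i"
    using first_min_newton_weight_exists[OF \<open>g \<noteq> 0\<close>] by metis
  obtain j0 where h0: "coeff h j0 \<noteq> 0" "?W h j0 = ?\<mu> h"
    and h_before: "\<And>j. j < j0 \<Longrightarrow> coeff h j \<noteq> 0 \<Longrightarrow> ?\<mu> h < ?W h j"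
    using first_min_newton_weight_exists[OF \<open>h \<noteq> 0\<close>] by metis
  define k where "k = i0 + j0"
  define E where "E = ?v (coeff g i0) + ?v (coeff h j0)"
  have split: "coeff (g * h) k = coeff g i0 * coeff h j0 + (\<Sum>u\<in>{..k} - {i0}. coeff g u * coeff h (k - u))"
    unfolding coeff_mult by (subst sum.remove[of _ i0]) (auto simp: k_def)
  have "p ^ Suc E dvd coeff g u * coeff h (k - u)" if u: "u \<in> {..k} - {i0}" for u
  proof (cases "coeff g u = 0 \<or> coeff h (k - u) = 0")
    case False
    then have nz: "coeff g u \<noteq> 0" "coeff h (k - u) \<noteq> 0" by auto
    have "?W g i0 + ?W h j0 < ?W g u + ?W h (k - u)"
    proof (cases "u < i0")
      case True
      then show ?thesis
        using g_before min_newton_weight_le[of h "k - u" A B p] g0 h0 nz by fastforce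
    next
      case False
      with u have "k - u < j0" by (auto simp: k_def)
      then show ?thesis
        using h_before min_newton_weight_le[of g u A B p] g0 h0 nz by fastforce
    qed
    moreover have "B * i0 + B * j0 = B * u + B * (k - u)"
      using u by (auto simp: k_def simp flip: distrib_left)
    ultimately have "A * E < A * (?v (coeff g u) + ?v (coeff h (k - u)))"
      by (simp add: newton_weight_def E_def distrib_left)
    then have "Suc E \<le> ?v (coeff g u * coeff h (k - u))"
      using nz p by (simp add: prime_elem_multiplicity_mult_distrib Suc_le_eq)
    then show ?thesis by (rule multiplicity_dvd')
  qed auto
  then have tail: "p ^ Suc E dvd (\<Sum>u\<in>{..k} - {i0}. coeff g u * coeff h (k - u))"
    by (rule dvd_sum)
  have "?v (coeff g i0 * coeff h j0) = E"
    using g0 h0 p by (simp add: prime_elem_multiplicity_mult_distrib E_def)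
  then have "\<not> p ^ Suc E dvd coeff g i0 * coeff h j0"
    using g0 h0 p by (subst power_dvd_iff_le_multiplicity) (auto simp: prime_elem_not_unit)
  then have not_dvd: "\<not> p ^ Suc E dvd coeff (g * h) k"
    unfolding split using tail by (simp add: dvd_add_left_iff)
  then have "coeff (g * h) k \<noteq> 0" by auto
  then have "?\<mu> (g * h) \<le> ?W (g * h) k" by (rule min_newton_weight_le)
  also have "\<dots> \<le> A * E + B * k"
    using multiplicity_lessI[OF _ _ not_dvd] \<open>coeff (g * h) k \<noteq> 0\<close> p
    by (simp add: newton_weight_def prime_elem_not_unit)
  also have "\<dots> = ?\<mu> g + ?\<mu> h"
    using g0 h0 by (simp add: newton_weight_def E_def k_def algebra_simps)
  finally show ?thesis .
qed

lemma min_newton_weight_ge_of_dvd_coeffs: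
  assumes "f \<noteq> 0" "\<not> is_unit p" and "\<forall>i < degree f. p ^ m dvd coeff f i"
  shows "degree f * m \<le> min_newton_weight (degree f) m p f"
proof (rule min_newton_weight_geI[OF \<open>f \<noteq> 0\<close>])
  fix i assume nz: "coeff f i \<noteq> 0"
  then have "i \<le> degree f" by (rule le_degree)
  show "degree f * m \<le> newton_weight (degree f) m p f i"
  proof (cases "i < degree f")
    case True
    then have "m \<le> multiplicity p (coeff f i)"
      using assms(2,3) nz by (intro multiplicity_geI) auto
    then show ?thesis by (simp add: newton_weight_def) (meson mult_le_mono2 trans_le_add1)
  qed (use \<open>i \<le> degree f\<close> in \<open>simp add: newton_weight_def\<close>)
qed

text \<open>
  A single-edge Newton polygon forces every factor to have an edge of the same slope.
\<close>
lemma newton_single_edge_factor_slope: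
  fixes f g h :: "'a :: factorial_semiring poly"
  assumes p: "prime_elem p" and fgh: "f = g * h" and f0: "coeff f 0 \<noteq> 0"
    and "\<not> p dvd lead_coeff f" and "\<forall>i < degree f. p ^ m dvd coeff f i"
    and v0: "multiplicity p (coeff f 0) = m"
  shows "degree f * multiplicity p (coeff g 0) = m * degree g"
proof -
  let ?n = "degree f" and ?v = "multiplicity p" and ?\<mu> = "min_newton_weight (degree f) m p"
  have "g \<noteq> 0" "h \<noteq> 0" "f \<noteq> 0" using f0 fgh by auto
  then have deg: "?n = degree g + degree h" by (simp add: fgh degree_mult_eq)
  have "coeff g 0 \<noteq> 0" "coeff h 0 \<noteq> 0" and "?v (coeff g 0) + ?v (coeff h 0) = m"
    using f0 v0 p by (auto simp: fgh coeff_mult_0 prime_elem_multiplicity_mult_distrib)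
  then have "?n * ?v (coeff g 0) + ?n * ?v (coeff h 0) = ?n * m"
    by (simp flip: distrib_left)
  moreover have "?\<mu> g \<le> ?n * ?v (coeff g 0)" "?\<mu> h \<le> ?n * ?v (coeff h 0)"
    using min_newton_weight_le[of g 0 ?n m p] min_newton_weight_le[of h 0 ?n m p]
      \<open>coeff g 0 \<noteq> 0\<close> \<open>coeff h 0 \<noteq> 0\<close> by (auto simp: newton_weight_def)
  moreover have "\<not> p dvd lead_coeff g" "\<not> p dvd lead_coeff h"
    using assms(4) by (auto simp: fgh lead_coeff_mult)
  then have "?\<mu> g \<le> m * degree g" "?\<mu> h \<le> m * degree h"
    using min_newton_weight_le[of g "degree g" ?n m p] min_newton_weight_le[of h "degree h" ?n m p]
      \<open>g \<noteq> 0\<close> \<open>h \<noteq> 0\<close> by (auto simp: newton_weight_def not_dvd_imp_multiplicity_0)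
  moreover have "?n * m \<le> ?\<mu> g + ?\<mu> h"
    using min_newton_weight_ge_of_dvd_coeffs[OF \<open>f \<noteq> 0\<close> prime_elem_not_unit[OF p] assms(5)]
      min_newton_weight_mult_le[OF p \<open>g \<noteq> 0\<close> \<open>h \<noteq> 0\<close>]
    unfolding fgh by (rule order.trans)
  moreover have "?n * m = m * degree g + m * degree h"
    using deg by (simp add: algebra_simps)
  ultimately show ?thesis by linarith
qed

theorem theorem3p2:
  fixes f :: "int poly" and p :: int
  assumes "\<not> 3 dvd degree f"
    and "prime p"
    and "\<not> p dvd lead_coeff f"
    and "\<forall>i < degree f. p ^ 3 dvd coeff f i"
    and "\<not> p ^ 4 dvd coeff f 0"
  shows "irreducible_over_Z f"
proof -
  define n where "n = degree f"
  let ?v = "multiplicity p"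
  have "n > 0" using assms(1) by (metis dvd_0_right gr0I n_def)
  have p: "prime_elem p" using assms(2) by (rule prime_imp_prime_elem)
  have f0: "coeff f 0 \<noteq> 0" using assms(5) by auto
  have "p ^ 3 dvd coeff f 0" using assms(4) \<open>n > 0\<close> by (simp add: n_def)
  then have "3 \<le> ?v (coeff f 0)" "?v (coeff f 0) < 4"
    using multiplicity_geI multiplicity_lessI assms(5) f0 prime_elem_not_unit[OF p] by blast+
  then have v0: "?v (coeff f 0) = 3" by simp
  show ?thesis unfolding irreducible_over_Z_def
  proof (intro conjI notI)
    show "degree f > 0" using \<open>n > 0\<close> by (simp add: n_def)
  next
    assume "\<exists>g h. degree g > 0 \<and> degree h > 0 \<and> f = g * h"
    then obtain g h where "degree g > 0" "degree h > 0" and fgh: "f = g * h" by blast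
    have slope: "n * ?v (coeff g 0) = 3 * degree g"
      using newton_single_edge_factor_slope[OF p fgh f0 assms(3,4) v0] by (simp add: n_def)
    then have "3 dvd n * ?v (coeff g 0)" by simp
    then have "3 dvd ?v (coeff g 0)"
      using assms(1) by (simp add: n_def prime_dvd_mult_iff)
    moreover have "0 < ?v (coeff g 0)" using slope \<open>degree g > 0\<close> by (auto intro: gr0I)
    moreover have "n = degree g + degree h"
      using \<open>degree g > 0\<close> \<open>degree h > 0\<close> unfolding n_def fgh
      by (metis degree_0 degree_mult_eq less_irrefl)
    then have "n * ?v (coeff g 0) < n * 3" using slope \<open>degree h > 0\<close> by simp
    then have "?v (coeff g 0) < 3" by simp
    ultimately show False by (auto dest: dvd_imp_le)
  qed
qed

end
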